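(* Let $A_i\in\mathbb{R}^{n\times n}$, $i\ge -1$, be entrywise nonnegative matrices such that $A=\sum_{i=-1}^{\infty}A_i$ is irreducible and row stochastic. Assume that $\sum_{i=-1}^\infty iA_i$ converges and $\eta=\mathbf v^T\mathbf w<0$, where $\mathbf v>0$ satisfies $\mathbf v^TA=\mathbf v^T$, $\mathbf v^T\mathbf e=1$, and $\mathbf w=\sum_{i=-1}^\infty iA_i\mathbf e$. Let $G$ be the componentwise minimal nonnegative solution of $X=\sum_{i=-1}^{\infty}A_iX^{i+1}$. Set $X_0=0$ and, for a sequence of reals $\{\omega_k\}_{k\ge1}$, define for $k\ge0$ \[ (I_n-A_0)Y_k=A_{-1}+\sum_{i=1}^{\infty}A_iX_k^{i+1},\qquad X_{k+1}=Y_k+\omega_{k+1}(I_n-A_0)^{-1}A_1\,(Y_k^2-X_k^2). \] If $\{\omega_k\}_{k\ge1}$ is eligible, then $\{X_k\}_{k\in\mathbb N}$ converges monotonically to $G$.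
   Context: $\mathbf e$ is the all-ones vector; inequalities between matrices/vectors are entrywise. The sequence $\{\omega_k\}_{k\ge1}$ is called eligible (for the iteration above) if $\omega_k\ge 0$ for all $k\ge1$ and, for all $k\ge 0$, with $X_k,Y_k,X_{k+1}$ generated by the iteration, \[ \omega_{k+1}A_1(Y_k^2-X_k^2)\le A_1(X_{k+1}^2-X_k^2)+\sum_{i=2}^{\infty}A_i(Y_k^{i+1}-X_k^{i+1}) \] and \[ X_{k+1}\mathbf e=Y_k\mathbf e+\omega_{k+1}(I_n-A_0)^{-1}A_1(Y_k^2-X_k^2)\mathbf e\le \mathbf e . \] *)

theory Defs
  imports "HOL-Analysis.Analysis"
begin

text \<open>Matrices are real^'n^'n; the order on vec is entrywise, so \<le> on matrices and
  vectors is the entrywise order of the paper.\<close>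

primrec mpow :: "real^'n^'n \<Rightarrow> nat \<Rightarrow> real^'n^'n" where
  "mpow M 0 = mat 1"
| "mpow M (Suc k) = M ** mpow M k"

definition ones :: "real^'n" where "ones = (\<chi> i. 1)"

definition irreducible_mat :: "real^'n^'n \<Rightarrow> bool" where
  "irreducible_mat M \<longleftrightarrow> (\<forall>i j. \<exists>k\<ge>1. mpow M k $ i $ j > 0)"

definition row_stochastic :: "real^'n^'n \<Rightarrow> bool" where
  "row_stochastic M \<longleftrightarrow> 0 \<le> M \<and> M *v ones = ones"

text \<open>Coefficients are indexed by int; only indices i \<ge> -1 are used.
  The series \<Sum>_{i\<ge>-1} f i is written (\<Sum>k. f (int k - 1)).\<close>

definition eligible ::
  "(int \<Rightarrow> real^'n^'n) \<Rightarrow> (nat \<Rightarrow> real^'n^'n) \<Rightarrow> (nat \<Rightarrow> real^'n^'n)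
     \<Rightarrow> (nat \<Rightarrow> real) \<Rightarrow> bool" where
  "eligible A X Y \<omega> \<longleftrightarrow>
     (\<forall>k\<ge>1. \<omega> k \<ge> 0) \<and>
     (\<forall>k. \<omega> (Suc k) *\<^sub>R (A 1 ** (mpow (Y k) 2 - mpow (X k) 2))
            \<le> A 1 ** (mpow (X (Suc k)) 2 - mpow (X k) 2)
              + (\<Sum>m. A (int m + 2) ** (mpow (Y k) (m + 3) - mpow (X k) (m + 3)))) \<and>
     (\<forall>k. X (Suc k) *v ones
            = Y k *v ones + \<omega> (Suc k) *\<^sub>R
                ((matrix_inv (mat 1 - A 0) ** A 1 ** (mpow (Y k) 2 - mpow (X k) 2)) *v ones)
          \<and> X (Suc k) *v ones \<le> ones)"

end

theory Submission
  imports Defs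
begin

text \<open>By induction, \<open>0 \<le> X\<^sub>k \<le> Y\<^sub>k \<le> X\<^sub>k\<^sub>+\<^sub>1\<close> with every \<open>X\<^sub>k\<close> substochastic: the step
  \<open>X\<^sub>k\<^sub>+\<^sub>1 \<le> Y\<^sub>k\<^sub>+\<^sub>1\<close> holds because eligibility makes \<open>(I - A\<^sub>0)(Y\<^sub>k\<^sub>+\<^sub>1 - X\<^sub>k\<^sub>+\<^sub>1)\<close>
  nonnegative and \<open>I - A\<^sub>0\<close> has a nonnegative inverse (a minimum principle for the irreducible
  stochastic matrix \<open>A\<close>). Hence \<open>X\<^sub>k\<close> increases to a substochastic solution \<open>L\<close>.

  Negative drift \<open>\<eta> < 0\<close> forces every substochastic solution \<open>Z\<close> to be stochastic:
  \<open>d\<^sub>k = \<one> - Z\<^sup>k \<one>\<close> is a bounded harmonic function of the level process vanishing at level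
  \<open>0\<close>, while \<open>k + g\<close>, with \<open>g\<close> from the Poisson equation of \<open>A\<close>, is a Lyapunov function of
  drift \<open>\<eta>\<close>; a maximum principle gives \<open>d \<le> \<epsilon> (k + g)\<close> for every \<open>\<epsilon> > 0\<close>. As \<open>G \<le> L\<close> and
  \<open>G \<one> = \<one> = L \<one>\<close>, the minimal solution \<open>G\<close> equals \<open>L\<close>.\<close>

section \<open>Entrywise order and series of matrices\<close>

lemma less_eq_mat_iff: "(M::real^'n^'m) \<le> N \<longleftrightarrow> (\<forall>i j. M$i$j \<le> N$i$j)"
  by (simp add: less_eq_vec_def)

lemma matrix_mult_nth: "(M ** N) $ i $ j = (\<Sum>k\<in>UNIV. M$i$k * N$k$j)"
  by (simp add: matrix_matrix_mult_def)

lemma matrix_vector_mult_nth: "(M *v x) $ i = (\<Sum>j\<in>UNIV. M$i$j * x$j)"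
  by (simp add: matrix_vector_mult_def)

lemma ones_nth [simp]: "ones $ i = 1"
  by (simp add: ones_def)

lemma ones_nonneg: "0 \<le> (ones :: real^'n)"
  by (simp add: less_eq_vec_def)

lemma mat_1_nonneg: "0 \<le> (mat 1 :: real^'n^'n)"
  by (simp add: less_eq_mat_iff mat_def)

lemma matrix_mult_nonneg: "0 \<le> (M::real^'n^'m) \<Longrightarrow> 0 \<le> (N::real^'p^'n) \<Longrightarrow> 0 \<le> M ** N"
  by (auto simp: less_eq_mat_iff matrix_mult_nth intro!: sum_nonneg)

lemma matrix_mult_left_mono:
  "0 \<le> (M::real^'n^'m) \<Longrightarrow> (N::real^'p^'n) \<le> P \<Longrightarrow> M ** N \<le> M ** P"
  by (auto simp: less_eq_mat_iff matrix_mult_nth intro!: sum_mono mult_left_mono)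

lemma matrix_mult_right_mono:
  "0 \<le> (P::real^'p^'n) \<Longrightarrow> (M::real^'n^'m) \<le> N \<Longrightarrow> M ** P \<le> N ** P"
  by (auto simp: less_eq_mat_iff matrix_mult_nth intro!: sum_mono mult_right_mono)

lemma matrix_vector_mult_nonneg: "0 \<le> (M::real^'n^'m) \<Longrightarrow> 0 \<le> x \<Longrightarrow> 0 \<le> M *v x"
  by (auto simp: less_eq_mat_iff less_eq_vec_def matrix_vector_mult_nth intro!: sum_nonneg)

lemma matrix_vector_mult_left_mono: "0 \<le> (M::real^'n^'m) \<Longrightarrow> x \<le> y \<Longrightarrow> M *v x \<le> M *v y"
  by (auto simp: less_eq_mat_iff less_eq_vec_def matrix_vector_mult_nth
      intro!: sum_mono mult_left_mono)

lemma matrix_vector_mult_right_mono: "0 \<le> x \<Longrightarrow> (M::real^'n^'m) \<le> N \<Longrightarrow> M *v x \<le> N *v x"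
  by (auto simp: less_eq_mat_iff less_eq_vec_def matrix_vector_mult_nth
      intro!: sum_mono mult_right_mono)

lemma matrix_diff_ldistrib: "(M::real^'n^'m) ** (N - P) = M ** N - M ** P"
  by (simp add: vec_eq_iff matrix_mult_nth right_diff_distrib sum_subtractf)

lemma matrix_diff_rdistrib: "((M::real^'n^'m) - N) ** P = M ** P - N ** P"
  by (simp add: vec_eq_iff matrix_mult_nth left_diff_distrib sum_subtractf)

lemma mpow_nonneg: "0 \<le> M \<Longrightarrow> 0 \<le> mpow M k"
  by (induction k) (auto simp: mat_1_nonneg matrix_mult_nonneg)

lemma mpow_mono: "0 \<le> M \<Longrightarrow> M \<le> N \<Longrightarrow> mpow M k \<le> mpow N k"
proof (induction k)
  case (Suc k)
  have "M ** mpow M k \<le> M ** mpow N k"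
    using Suc by (intro matrix_mult_left_mono) auto
  also have "\<dots> \<le> N ** mpow N k"
    using Suc by (intro matrix_mult_right_mono mpow_nonneg) (auto intro: order_trans)
  finally show ?case by simp
qed simp

lemma mpow_add: "mpow M (a + b) = mpow M a ** mpow M b"
  by (induction a) (auto simp: matrix_mul_assoc)

lemma mpow_zero: "k \<noteq> 0 \<Longrightarrow> mpow 0 k = 0"
  by (cases k) simp_all

lemma summable_mat_nth: "summable (f::nat \<Rightarrow> real^'n^'m) \<Longrightarrow> summable (\<lambda>k. f k $ i $ j)"
  by (intro summable_vec_nth)

lemma suminf_mat_nth: "summable (f::nat \<Rightarrow> real^'n^'m) \<Longrightarrow> suminf f $ i $ j = (\<Sum>k. f k $ i $ j)"
  by (metis sums_vec_nth summable_sums sums_unique)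

lemma summable_matI:
  assumes "\<And>i j. summable (\<lambda>k. (f::nat \<Rightarrow> real^'n^'m) k $ i $ j)"
  shows "summable f"
proof -
  have "f sums (\<chi> i j. \<Sum>k. f k $ i $ j)"
    unfolding sums_def by (intro vec_tendstoI) (simp add: summable_LIMSEQ assms)
  then show ?thesis by (rule sums_summable)
qed

lemma suminf_mat_mono:
  assumes "summable (f::nat \<Rightarrow> real^'n^'m)" "summable g" "\<And>k. f k \<le> g k"
  shows "suminf f \<le> suminf g"
  using assms by (auto simp: less_eq_mat_iff suminf_mat_nth intro!: suminf_le summable_mat_nth)

lemma suminf_matrix_vector_mult_nth:
  assumes "summable (f::nat \<Rightarrow> real^'n^'m)"
  shows "(suminf f *v x) $ i = (\<Sum>k. (f k *v x) $ i)"
proof -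
  have "(suminf f *v x) $ i = (\<Sum>j\<in>UNIV. \<Sum>k. f k $ i $ j * x $ j)"
    by (simp add: matrix_vector_mult_nth suminf_mat_nth[OF assms]
        suminf_mult2[OF summable_mat_nth[OF assms]])
  also have "\<dots> = (\<Sum>k. (f k *v x) $ i)"
    by (simp add: matrix_vector_mult_nth suminf_sum summable_mult2 summable_mat_nth[OF assms])
  finally show ?thesis .
qed

lemma tendsto_matrix_mult [tendsto_intros]:
  fixes f g :: "'a \<Rightarrow> real^'n^'n"
  assumes "(f \<longlongrightarrow> M) F" "(g \<longlongrightarrow> N) F"
  shows "((\<lambda>x. f x ** g x) \<longlongrightarrow> M ** N) F"
  by (intro vec_tendstoI) (simp add: matrix_mult_nth, intro tendsto_intros assms)

lemma tendsto_mpow [tendsto_intros]: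
  fixes f :: "'a \<Rightarrow> real^'n^'n"
  assumes "(f \<longlongrightarrow> M) F"
  shows "((\<lambda>x. mpow (f x) k) \<longlongrightarrow> mpow M k) F"
  by (induction k) (auto intro: tendsto_matrix_mult assms)

definition substochastic :: "real^'n^'n \<Rightarrow> bool" where
  "substochastic Z \<longleftrightarrow> 0 \<le> Z \<and> Z *v ones \<le> ones"

lemma substochastic_entry:
  assumes "substochastic Z"
  shows "0 \<le> Z $ i $ j \<and> Z $ i $ j \<le> 1"
proof -
  have "0 \<le> Z" "Z *v ones \<le> ones" using assms by (auto simp: substochastic_def)
  then have "Z $ i $ j \<le> (\<Sum>l\<in>UNIV. Z$i$l)"
    by (intro member_le_sum) (auto simp: less_eq_mat_iff)
  also have "\<dots> \<le> 1"
    using \<open>Z *v ones \<le> ones\<close> by (simp add: less_eq_vec_def matrix_vector_mult_nth)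
  finally show ?thesis using \<open>0 \<le> Z\<close> by (simp add: less_eq_mat_iff)
qed

lemma substochastic_mpow: "substochastic Z \<Longrightarrow> substochastic (mpow Z k)"
proof (induction k)
  case (Suc k)
  then have "Z *v (mpow Z k *v ones) \<le> Z *v ones"
    by (intro matrix_vector_mult_left_mono) (auto simp: substochastic_def)
  with Suc show ?case
    by (auto simp: substochastic_def matrix_vector_mul_assoc intro: matrix_mult_nonneg order_trans)
qed (simp add: substochastic_def mat_1_nonneg)

lemma matrix_mult_substochastic_nth:
  assumes "0 \<le> (M::real^'n^'n)" and "substochastic P"
  shows "0 \<le> (M ** P) $ i $ j \<and> (M ** P) $ i $ j \<le> (\<Sum>l\<in>UNIV. M $ i $ l)"
proof
  have "0 \<le> M ** P"
    using assms by (intro matrix_mult_nonneg) (auto simp: substochastic_def)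
  then show "0 \<le> (M ** P) $ i $ j" by (simp add: less_eq_mat_iff)
  show "(M ** P) $ i $ j \<le> (\<Sum>l\<in>UNIV. M $ i $ l)"
    unfolding matrix_mult_nth using assms
    by (intro sum_mono) (auto simp: less_eq_mat_iff intro: mult_left_le substochastic_entry[THEN conjunct2])
qed

lemma substochastic_le: "0 \<le> Y \<Longrightarrow> Y \<le> Z \<Longrightarrow> substochastic Z \<Longrightarrow> substochastic Y"
  unfolding substochastic_def
  by (meson matrix_vector_mult_right_mono ones_nonneg order_trans)

lemma substochastic_limit:
  assumes "\<And>k. substochastic (X k)" and "X \<longlonglongrightarrow> L"
  shows "substochastic L"
proof -
  have "(\<lambda>k. X k $ i $ j) \<longlonglongrightarrow> L $ i $ j" for i j
    using assms(2) by (intro tendsto_vec_nth)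
  moreover have "(\<lambda>k. (X k *v ones) $ i) \<longlonglongrightarrow> (L *v ones) $ i" for i
    unfolding matrix_vector_mult_nth by (intro tendsto_intros assms(2))
  moreover have "0 \<le> X k $ i $ j" "(X k *v ones) $ i \<le> 1" for k i j
    using assms(1)[of k] by (auto simp: substochastic_def less_eq_mat_iff less_eq_vec_def)
  ultimately have "0 \<le> L $ i $ j" "(L *v ones) $ i \<le> 1" for i j
    by (meson LIMSEQ_le_const LIMSEQ_le_const2)+
  then show ?thesis
    by (simp add: substochastic_def less_eq_mat_iff less_eq_vec_def)
qed

lemma eq_if_le_and_row_sums_eq:
  assumes "(M::real^'n^'m) \<le> N" and "M *v ones = N *v ones"
  shows "M = N"
proof -
  have "(\<Sum>l\<in>UNIV. N $ i $ l - M $ i $ l) = 0" for i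
    using arg_cong[where f="\<lambda>x. x $ i", OF assms(2)]
    by (simp add: matrix_vector_mult_nth sum_subtractf)
  then have "N $ i $ l - M $ i $ l = 0" for i l
    using assms(1) by (subst (asm) sum_nonneg_eq_0_iff) (auto simp: less_eq_mat_iff)
  then show ?thesis by (simp add: vec_eq_iff)
qed

section \<open>Irreducible stochastic matrices\<close>

lemma irreducible_mat_closed_set:
  fixes M :: "real^'n^'n"
  assumes irr: "irreducible_mat M" and nonneg: "0 \<le> M" and "j0 \<in> S"
    and closed: "\<And>j l. j \<in> S \<Longrightarrow> 0 < M$j$l \<Longrightarrow> l \<in> S"
  shows "S = UNIV"
proof -
  have reach: "j \<in> S \<Longrightarrow> 0 < mpow M k $ j $ l \<Longrightarrow> l \<in> S" for k j l
  proof (induction k arbitrary: j)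
    case 0
    then show ?case by (auto simp: mat_def split: if_splits)
  next
    case (Suc k)
    have "0 < (\<Sum>p\<in>UNIV. M$j$p * mpow M k $ p $ l)"
      using Suc.prems by (simp add: matrix_mult_nth)
    then obtain p where p: "0 < M$j$p * mpow M k $ p $ l"
      by (metis (no_types, lifting) linorder_not_less sum_nonpos)
    have "0 \<le> M$j$p" "0 \<le> mpow M k $ p $ l"
      using nonneg mpow_nonneg[OF nonneg, of k] by (auto simp: less_eq_mat_iff)
    with p have "0 < M$j$p" "0 < mpow M k $ p $ l" by (auto simp: zero_less_mult_iff)
    then show ?case using Suc closed by blast
  qed
  show ?thesis
  proof (intro set_eqI iffI)
    fix l
    obtain k where "0 < mpow M k $ j0 $ l" using irr unfolding irreducible_mat_def by blast
    then show "l \<in> S" using reach \<open>j0 \<in> S\<close> by blast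
  qed simp
qed

lemma row_stochastic_row_sum: "row_stochastic P \<Longrightarrow> (\<Sum>l\<in>UNIV. P $ j $ l) = 1"
  by (auto simp: row_stochastic_def vec_eq_iff matrix_vector_mult_nth)

lemma irreducible_stochastic_fixed_vector_const:
  fixes P :: "real^'n^'n"
  assumes irr: "irreducible_mat P" and stoch: "row_stochastic P" and fixed: "P *v x = x"
  shows "x $ j = x $ l"
proof -
  define M where "M = Max (range (\<lambda>l. x $ l))"
  have le_M: "x $ l \<le> M" for l unfolding M_def by simp
  define S where "S = {j. x $ j = M}"
  have "M \<in> range (\<lambda>l. x $ l)" unfolding M_def by (intro Max_in) auto
  then obtain j0 where "j0 \<in> S" unfolding S_def by auto
  have "l \<in> S" if "j \<in> S" and "0 < P $ j $ l" for j l
  proof -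
    have "(\<Sum>l\<in>UNIV. P $ j $ l * x $ l) = M"
      using arg_cong[where f="\<lambda>y. y $ j", OF fixed] \<open>j \<in> S\<close>
      by (simp add: S_def matrix_vector_mult_nth)
    then have "(\<Sum>l\<in>UNIV. P $ j $ l * (M - x $ l)) = 0"
      using row_stochastic_row_sum[OF stoch, of j]
      by (simp add: right_diff_distrib sum_subtractf sum_distrib_right[symmetric])
    then have "P $ j $ l * (M - x $ l) = 0"
      using stoch
      by (subst (asm) sum_nonneg_eq_0_iff)
        (auto simp: row_stochastic_def less_eq_mat_iff le_M)
    then show ?thesis using \<open>0 < P $ j $ l\<close> by (simp add: S_def)
  qed
  then have "S = UNIV"
    using irr stoch \<open>j0 \<in> S\<close> by (intro irreducible_mat_closed_set) (auto simp: row_stochastic_def)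
  then show ?thesis by (auto simp: S_def set_eq_iff)
qed

lemma excessive_vector_min_row:
  fixes P Q :: "real^'n^'n"
  assumes stoch: "row_stochastic P" and Q: "0 \<le> Q" "Q \<le> P" and excessive: "Q *v z \<le> z"
    and min: "\<And>l. m \<le> z $ l" and "m < 0" and "z $ j = m"
  shows "P $ j $ l = Q $ j $ l" and "0 < Q $ j $ l \<Longrightarrow> z $ l = m"
proof -
  have Q_le: "0 \<le> Q $ j $ l" "Q $ j $ l \<le> P $ j $ l" for l
    using Q by (auto simp: less_eq_mat_iff)
  define r where "r = (\<Sum>l\<in>UNIV. Q $ j $ l)"
  have "r \<le> 1"
    unfolding r_def row_stochastic_row_sum[OF stoch, of j, symmetric] by (intro sum_mono Q_le)
  have "(Q *v z) $ j = (\<Sum>l\<in>UNIV. Q $ j $ l * m + Q $ j $ l * (z $ l - m))"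
    by (simp add: matrix_vector_mult_nth algebra_simps)
  then have "m * r + (\<Sum>l\<in>UNIV. Q $ j $ l * (z $ l - m)) = (Q *v z) $ j"
    by (simp add: r_def sum.distrib sum_distrib_left mult.commute)
  also have "\<dots> \<le> z $ j" using excessive by (simp add: less_eq_vec_def)
  finally have le: "m * r + (\<Sum>l\<in>UNIV. Q $ j $ l * (z $ l - m)) \<le> m"
    using \<open>z $ j = m\<close> by simp
  have nonneg: "0 \<le> (\<Sum>l\<in>UNIV. Q $ j $ l * (z $ l - m))"
    by (intro sum_nonneg mult_nonneg_nonneg Q_le) (simp add: min)
  have "m \<le> m * r" using \<open>m < 0\<close> \<open>r \<le> 1\<close> by (simp add: mult_le_cancel_left1)
  with le nonneg have zero: "(\<Sum>l\<in>UNIV. Q $ j $ l * (z $ l - m)) = 0" and "m * r = m * 1"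
    by linarith+
  then have "r = 1" using \<open>m < 0\<close> by simp
  then have "(\<Sum>l\<in>UNIV. P $ j $ l - Q $ j $ l) = 0"
    by (simp add: sum_subtractf r_def row_stochastic_row_sum[OF stoch])
  then have "P $ j $ l - Q $ j $ l = 0"
    by (subst (asm) sum_nonneg_eq_0_iff) (auto simp: Q_le)
  then show "P $ j $ l = Q $ j $ l" by simp
  from zero have "Q $ j $ l * (z $ l - m) = 0"
    by (subst (asm) sum_nonneg_eq_0_iff) (auto intro: mult_nonneg_nonneg Q_le simp: min)
  then show "z $ l = m" if "0 < Q $ j $ l" using that by simp
qed

text \<open>On the set where a negative minimum of \<open>z\<close> is attained, \<open>Q\<close> coincides with \<open>P\<close> and
  keeps that set closed; irreducibility then forces \<open>Q = P\<close>.\<close>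

lemma excessive_vector_nonneg:
  fixes P Q :: "real^'n^'n"
  assumes irr: "irreducible_mat P" and stoch: "row_stochastic P"
    and Q: "0 \<le> Q" "Q \<le> P" "Q \<noteq> P" and excessive: "Q *v z \<le> z"
  shows "0 \<le> z"
proof (rule ccontr)
  assume "\<not> 0 \<le> z"
  define m where "m = Min (range (\<lambda>l. z $ l))"
  have min: "m \<le> z $ l" for l unfolding m_def by simp
  obtain i where "z $ i < 0" using \<open>\<not> 0 \<le> z\<close> by (auto simp: less_eq_vec_def not_le)
  then have "m < 0" using min[of i] by simp
  define S where "S = {j. z $ j = m}"
  have "m \<in> range (\<lambda>l. z $ l)" unfolding m_def by (intro Min_in) auto
  then obtain j0 where "j0 \<in> S" unfolding S_def by auto
  note row = excessive_vector_min_row[OF stoch Q(1,2) excessive min \<open>m < 0\<close>]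
  have closed: "l \<in> S" if "j \<in> S" and "0 < P $ j $ l" for j l
    using row(1)[of j l] row(2)[of j l] that by (simp add: S_def)
  have "0 \<le> P" using stoch by (simp add: row_stochastic_def)
  with irr have "S = UNIV" using \<open>j0 \<in> S\<close> closed by (rule irreducible_mat_closed_set)
  then have "z $ j = m" for j by (metis S_def UNIV_I mem_Collect_eq)
  then have "P $ j $ l = Q $ j $ l" for j l by (rule row(1))
  then show False using \<open>Q \<noteq> P\<close> by (simp add: vec_eq_iff)
qed

lemma monotone_matrix_invertible:
  fixes B :: "real^'n^'n"
  assumes mono: "\<And>x. 0 \<le> B *v x \<Longrightarrow> 0 \<le> x"
  shows "invertible B"
proof -
  have "x = 0" if "B *v x = 0" for x
  proof -
    have "B *v (-x) = 0"
      using that by (simp add: linear_neg[OF matrix_vector_mul_linear])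
    with that have "0 \<le> x" "0 \<le> -x" using mono[of x] mono[of "-x"] by simp_all
    then show ?thesis by (metis neg_0_le_iff_le order.antisym)
  qed
  then show ?thesis
    by (simp add: invertible_left_inverse matrix_left_invertible_ker)
qed

lemma matrix_inv_inverse:
  fixes B :: "real^'n^'n"
  assumes "invertible B"
  shows "B ** matrix_inv B = mat 1" and "matrix_inv B ** B = mat 1"
  using someI_ex[OF assms[unfolded invertible_def]] by (auto simp: matrix_inv_def)

lemma monotone_matrix_cancel_nonneg:
  fixes B :: "real^'n^'n" and Z :: "real^'p^'n"
  assumes mono: "\<And>x. 0 \<le> B *v x \<Longrightarrow> 0 \<le> x" and "0 \<le> B ** Z"
  shows "0 \<le> Z"
proof -
  have "0 \<le> column p Z" for p
    using mono[of "column p Z"] \<open>0 \<le> B ** Z\<close>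
    by (simp add: less_eq_vec_def less_eq_mat_iff matrix_vector_mult_nth matrix_mult_nth column_def)
  then show ?thesis by (simp add: less_eq_vec_def less_eq_mat_iff column_def)
qed

lemma monotone_matrix_inv_nonneg:
  fixes B :: "real^'n^'n"
  assumes mono: "\<And>x. 0 \<le> B *v x \<Longrightarrow> 0 \<le> x"
  shows "0 \<le> matrix_inv B"
proof (rule monotone_matrix_cancel_nonneg[OF mono])
  show "0 \<le> B ** matrix_inv B"
    using matrix_inv_inverse(1)[OF monotone_matrix_invertible] mono mat_1_nonneg by metis
qed

lemma irreducible_stochastic_poisson:
  fixes P :: "real^'n^'n"
  assumes irr: "irreducible_mat P" and stoch: "row_stochastic P"
    and stat: "v v* P = v" and norm: "v \<bullet> ones = 1" and "v \<bullet> g = 0"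
  obtains h where "h - P *v h = g"
proof -
  define B where "B = mat 1 - P + (\<chi> i j. v $ j)"
  have B_mult: "B *v x = x - P *v x + (v \<bullet> x) *\<^sub>R ones" for x
    by (simp add: B_def matrix_vector_mult_add_rdistrib matrix_vector_mult_diff_rdistrib
        vec_eq_iff matrix_vector_mult_nth inner_vec_def)
  have v_P: "v \<bullet> (P *v x) = v \<bullet> x" for x
    by (metis dot_lmul_matrix stat)
  have v_B: "v \<bullet> (B *v x) = v \<bullet> x" for x
    by (simp add: B_mult inner_diff_right inner_add_right v_P norm)
  have "x = 0" if "B *v x = 0" for x
  proof -
    have "v \<bullet> x = 0" using v_B[of x] that by simp
    then have "P *v x = x" using that by (simp add: B_mult)
    then have const: "x $ j = x $ l" for j l
      using irreducible_stochastic_fixed_vector_const[OF irr stoch] by blast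
    have "x $ j = 0" for j
    proof -
      have "x = x $ j *\<^sub>R ones" using const by (auto simp: vec_eq_iff)
      then have "v \<bullet> x = x $ j" using norm by (metis inner_scaleR_right mult.right_neutral)
      with \<open>v \<bullet> x = 0\<close> show ?thesis by simp
    qed
    then show "x = 0" by (simp add: vec_eq_iff)
  qed
  then have "invertible B"
    by (simp add: invertible_left_inverse matrix_left_invertible_ker)
  define h where "h = matrix_inv B *v g"
  have "B *v h = g"
    by (simp add: h_def matrix_vector_mul_assoc matrix_inv_inverse[OF \<open>invertible B\<close>])
  moreover from this have "v \<bullet> h = 0" using v_B[of h] \<open>v \<bullet> g = 0\<close> by simp
  ultimately have "h - P *v h = g" by (simp add: B_mult)
  then show thesis by (rule that)
qed

section \<open>Level functions of an M/G/1-type chain\<close>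

definition linear_growth :: "(nat \<Rightarrow> 'n \<Rightarrow> real) \<Rightarrow> bool" where
  "linear_growth u \<longleftrightarrow> (\<exists>a b. \<forall>k l. \<bar>u k l\<bar> \<le> a + b * real k)"

lemma linear_growth_bounded: "(\<And>k l. \<bar>u k l\<bar> \<le> c) \<Longrightarrow> linear_growth u"
  unfolding linear_growth_def by (rule exI[of _ c], rule exI[of _ 0]) simp

lemma linear_growth_level: "linear_growth (\<lambda>k l. real k)"
  unfolding linear_growth_def by (rule exI[of _ 0], rule exI[of _ 1]) simp

lemma linear_growth_const: "linear_growth (\<lambda>k l. g $ l)"
  by (rule linear_growth_bounded[of _ "\<Sum>l\<in>UNIV. \<bar>g $ l\<bar>"], rule member_le_sum) simp_all

lemma linear_growth_lincomb:
  assumes "linear_growth u" and "linear_growth w"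
  shows "linear_growth (\<lambda>k l. a * u k l + b * w k l)"
proof -
  obtain a1 b1 a2 b2 where u: "\<And>k l. \<bar>u k l\<bar> \<le> a1 + b1 * real k"
    and w: "\<And>k l. \<bar>w k l\<bar> \<le> a2 + b2 * real k"
    using assms unfolding linear_growth_def by blast
  have "\<bar>a * u k l + b * w k l\<bar> \<le> (\<bar>a\<bar> * a1 + \<bar>b\<bar> * a2) + (\<bar>a\<bar> * b1 + \<bar>b\<bar> * b2) * real k"
    for k l
  proof -
    have "\<bar>a * u k l + b * w k l\<bar> \<le> \<bar>a\<bar> * \<bar>u k l\<bar> + \<bar>b\<bar> * \<bar>w k l\<bar>"
      by (metis abs_mult abs_triangle_ineq)
    also have "\<dots> \<le> \<bar>a\<bar> * (a1 + b1 * real k) + \<bar>b\<bar> * (a2 + b2 * real k)"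
      by (intro add_mono mult_left_mono u w) simp_all
    finally show ?thesis by (simp add: algebra_simps)
  qed
  then show ?thesis unfolding linear_growth_def by blast
qed

lemma linear_growth_level_plus_const: "linear_growth (\<lambda>k l. real k + g $ l)"
  using linear_growth_lincomb[where a=1 and b=1, OF linear_growth_level linear_growth_const]
  by simp

locale mg1_type =
  fixes A :: "int \<Rightarrow> real^'n^'n" and v :: "real^'n"
  assumes nonneg: "\<And>i. i \<ge> -1 \<Longrightarrow> 0 \<le> A i"
    and summable_A: "summable (\<lambda>k. A (int k - 1))"
    and irred: "irreducible_mat (\<Sum>k. A (int k - 1))"
    and stoch: "row_stochastic (\<Sum>k. A (int k - 1))"
    and summable_iA: "summable (\<lambda>k. of_int (int k - 1) *\<^sub>R A (int k - 1))"
    and v_stat: "v v* (\<Sum>k. A (int k - 1)) = v"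
    and v_norm: "v \<bullet> ones = 1"
    and eta_neg: "v \<bullet> ((\<Sum>k. of_int (int k - 1) *\<^sub>R A (int k - 1)) *v ones) < 0"
begin

definition "A_total = (\<Sum>k. A (int k - 1))"

definition "drift = (\<Sum>k. of_int (int k - 1) *\<^sub>R A (int k - 1)) *v ones"

definition "eta = v \<bullet> drift"

text \<open>\<open>drift\<close> is the vector \<open>w\<close> of the statement. Index \<open>t\<close> stands for the level change
  \<open>t - 1 \<ge> -1\<close>.\<close>

definition "jump_prob t j = (\<Sum>l\<in>UNIV. A (int t - 1) $ j $ l)"

lemma eta_less_0: "eta < 0"
  using eta_neg by (simp add: eta_def drift_def)

lemma A_nonneg: "0 \<le> A (int t - 1)"
  by (rule nonneg) simp

lemma A_nonneg_nth: "0 \<le> A (int t - 1) $ j $ l"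
  using A_nonneg by (simp add: less_eq_mat_iff)

lemma summable_A_nth: "summable (\<lambda>t. A (int t - 1) $ j $ l)"
  by (rule summable_mat_nth[OF summable_A])

lemma A_total_nth: "A_total $ j $ l = (\<Sum>t. A (int t - 1) $ j $ l)"
  unfolding A_total_def by (rule suminf_mat_nth[OF summable_A])

lemma A_total_ones: "A_total *v ones = ones"
  using stoch by (simp add: A_total_def row_stochastic_def)

lemma A_le_A_total: "A (int t - 1) \<le> A_total"
proof -
  have "(\<Sum>t\<in>{t}. A (int t - 1) $ j $ l) \<le> (\<Sum>t. A (int t - 1) $ j $ l)" for j l
    by (rule sum_le_suminf) (auto simp: summable_A_nth A_nonneg_nth)
  then show ?thesis by (simp add: less_eq_mat_iff A_total_nth)
qed

lemma summable_jump_prob: "summable (\<lambda>t. jump_prob t j)"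
  unfolding jump_prob_def by (intro summable_sum summable_A_nth)

lemma suminf_jump_prob: "(\<Sum>t. jump_prob t j) = 1"
proof -
  have "(\<Sum>t. jump_prob t j) = (A_total *v ones) $ j"
    unfolding jump_prob_def
    by (subst suminf_sum) (auto simp: summable_A_nth A_total_nth matrix_vector_mult_nth)
  then show ?thesis by (simp add: A_total_ones)
qed

lemma summable_drift_terms: "summable (\<lambda>t. of_int (int t - 1) * jump_prob t j)"
  unfolding jump_prob_def sum_distrib_left
  by (intro summable_sum) (use summable_mat_nth[OF summable_iA] in simp)

lemma drift_nth: "drift $ j = (\<Sum>t. of_int (int t - 1) * jump_prob t j)"
proof -
  have "drift $ j = (\<Sum>l\<in>UNIV. (\<Sum>t. of_int (int t - 1) *\<^sub>R A (int t - 1)) $ j $ l)"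
    by (simp add: drift_def matrix_vector_mult_nth)
  also have "\<dots> = (\<Sum>l\<in>UNIV. \<Sum>t. of_int (int t - 1) * A (int t - 1) $ j $ l)"
    by (intro sum.cong refl trans[OF suminf_mat_nth[OF summable_iA]]) simp
  also have "\<dots> = (\<Sum>t. \<Sum>l\<in>UNIV. of_int (int t - 1) * A (int t - 1) $ j $ l)"
    by (rule suminf_sum[symmetric]) (use summable_mat_nth[OF summable_iA] in simp)
  finally show ?thesis by (simp add: jump_prob_def sum_distrib_left)
qed

text \<open>If \<open>A 0\<close> carried all of \<open>A_total\<close>, the level would never move and the drift would vanish.\<close>

lemma A0_ne_A_total: "A 0 \<noteq> A_total"
proof
  assume A0: "A 0 = A_total"
  have "A (int t - 1) $ j $ l = 0" if "t \<noteq> 1" for t j l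
  proof -
    have "(\<Sum>s\<in>{1, t}. A (int s - 1) $ j $ l) \<le> (\<Sum>s. A (int s - 1) $ j $ l)"
      by (rule sum_le_suminf) (auto simp: summable_A_nth A_nonneg_nth)
    then show ?thesis
      using that A0 A_nonneg_nth[of t j l] by (simp add: A_total_nth[symmetric])
  qed
  then have zero_terms: "of_int (int t - 1) * jump_prob t j = 0" for t j
    by (cases "t = 1") (simp_all add: jump_prob_def)
  have "drift = 0"
    by (simp only: vec_eq_iff drift_nth zero_terms suminf_zero zero_index) simp
  then show False using eta_less_0 by (simp add: eta_def)
qed

lemma I_minus_A0_monotone:
  assumes "0 \<le> (mat 1 - A 0) *v z"
  shows "0 \<le> z"
proof (rule excessive_vector_nonneg)
  show "irreducible_mat A_total" "row_stochastic A_total"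
    using irred stoch by (simp_all add: A_total_def)
  show "0 \<le> A 0" "A 0 \<le> A_total" "A 0 \<noteq> A_total"
    using A_nonneg[of 1] A_le_A_total[of 1] A0_ne_A_total by simp_all
  show "A 0 *v z \<le> z"
    using assms by (simp add: matrix_vector_mult_diff_rdistrib)
qed

lemma invertible_I_minus_A0: "invertible (mat 1 - A 0)"
  using I_minus_A0_monotone by (rule monotone_matrix_invertible)

lemma I_minus_A0_inv_nonneg: "0 \<le> matrix_inv (mat 1 - A 0)"
  using I_minus_A0_monotone by (rule monotone_matrix_inv_nonneg)

lemma I_minus_A0_cancel_nonneg:
  assumes "0 \<le> (mat 1 - A 0) ** Z"
  shows "0 \<le> Z"
  by (rule monotone_matrix_cancel_nonneg[OF I_minus_A0_monotone assms])

text \<open>\<open>level_mean u k j\<close> is the expectation of \<open>u\<close> after one transition of the chain from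
  level \<open>k + 1\<close> in phase \<open>j\<close>.\<close>

definition level_mean :: "(nat \<Rightarrow> 'n \<Rightarrow> real) \<Rightarrow> nat \<Rightarrow> 'n \<Rightarrow> real" where
  "level_mean u k j = (\<Sum>t. \<Sum>l\<in>UNIV. A (int t - 1) $ j $ l * u (t + k) l)"

lemma summable_level_mean:
  assumes "linear_growth u"
  shows "summable (\<lambda>t. \<Sum>l\<in>UNIV. A (int t - 1) $ j $ l * u (t + k) l)"
proof -
  obtain a b where ab: "\<And>k l. \<bar>u k l\<bar> \<le> a + b * real k"
    using assms unfolding linear_growth_def by blast
  have "norm (\<Sum>l\<in>UNIV. A (int t - 1) $ j $ l * u (t + k) l)
      \<le> (a + b * (real k + 1)) * jump_prob t j + b * (of_int (int t - 1) * jump_prob t j)" for t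
  proof -
    have "norm (\<Sum>l\<in>UNIV. A (int t - 1) $ j $ l * u (t + k) l)
        \<le> (\<Sum>l\<in>UNIV. A (int t - 1) $ j $ l * (a + b * real (t + k)))"
      unfolding real_norm_def
      by (rule order_trans[OF sum_abs], intro sum_mono)
        (simp add: abs_mult A_nonneg_nth, intro mult_left_mono A_nonneg_nth, use ab[of "t + k"] in simp)
    also have "\<dots> = (a + b * real (t + k)) * jump_prob t j"
      by (simp add: jump_prob_def sum_distrib_left mult.commute)
    finally show ?thesis by (simp add: algebra_simps)
  qed
  then show ?thesis
    by (rule summable_comparison_test'[rotated])
      (intro summable_add summable_mult2 summable_mult summable_jump_prob summable_drift_terms)
qed

lemma level_mean_lincomb:
  assumes "linear_growth u" and "linear_growth w"
  shows "level_mean (\<lambda>k l. a * u k l + b * w k l) k j = a * level_mean u k j + b * level_mean w k j"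
proof -
  have "level_mean (\<lambda>k l. a * u k l + b * w k l) k j
      = (\<Sum>t. a * (\<Sum>l\<in>UNIV. A (int t - 1) $ j $ l * u (t + k) l)
             + b * (\<Sum>l\<in>UNIV. A (int t - 1) $ j $ l * w (t + k) l))"
    by (simp add: level_mean_def algebra_simps sum.distrib sum_distrib_left)
  also have "\<dots> = a * level_mean u k j + b * level_mean w k j"
    using summable_level_mean[OF assms(1)] summable_level_mean[OF assms(2)]
    by (simp add: level_mean_def suminf_add[symmetric] summable_mult suminf_mult)
  finally show ?thesis .
qed

lemma level_mean_mono:
  assumes "linear_growth u" and "linear_growth w" and "\<And>k l. u k l \<le> w k l"
  shows "level_mean u k j \<le> level_mean w k j"
  unfolding level_mean_def
  by (intro suminf_le summable_level_mean assms sum_mono mult_left_mono A_nonneg_nth)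

lemma level_mean_const: "level_mean (\<lambda>k l. c $ l) k j = (A_total *v c) $ j"
proof -
  have "level_mean (\<lambda>k l. c $ l) k j = (\<Sum>l\<in>UNIV. \<Sum>t. A (int t - 1) $ j $ l * c $ l)"
    unfolding level_mean_def by (rule suminf_sum) (intro summable_mult2 summable_A_nth)
  then show ?thesis
    by (simp add: A_total_nth suminf_mult2[OF summable_A_nth] matrix_vector_mult_nth)
qed

lemma level_mean_constant: "level_mean (\<lambda>k l. c) k j = c"
  using level_mean_const[of "c *\<^sub>R ones"] by (simp add: matrix_vector_mult_scaleR A_total_ones)

lemma level_mean_level: "level_mean (\<lambda>k l. real k) k j = real (Suc k) + drift $ j"
proof -
  have "level_mean (\<lambda>k l. real k) k j = (\<Sum>t. real (t + k) * jump_prob t j)"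
    by (simp add: level_mean_def jump_prob_def sum_distrib_left mult.commute)
  also have "\<dots> = (\<Sum>t. of_int (int t - 1) * jump_prob t j + (real k + 1) * jump_prob t j)"
    by (simp add: algebra_simps)
  also have "\<dots> = (\<Sum>t. of_int (int t - 1) * jump_prob t j) + (\<Sum>t. (real k + 1) * jump_prob t j)"
    by (rule suminf_add[symmetric]) (intro summable_drift_terms summable_mult summable_jump_prob)+
  also have "\<dots> = drift $ j + (real k + 1)"
    by (simp only: suminf_mult[OF summable_jump_prob] suminf_jump_prob drift_nth) simp
  finally show ?thesis by simp
qed

lemma level_max_principle:
  assumes growth: "linear_growth \<phi>" and "c < 0"
    and base: "\<And>l. \<phi> 0 l \<le> 0" and far: "\<And>k l. K \<le> k \<Longrightarrow> \<phi> k l \<le> 0"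
    and sub: "\<And>k j. \<phi> (Suc k) j \<le> level_mean \<phi> k j + c"
  shows "\<phi> k l \<le> 0"
proof (rule ccontr)
  assume pos: "\<not> \<phi> k l \<le> 0"
  define M where "M = Max ((\<lambda>(k, l). \<phi> k l) ` ({..K} \<times> UNIV))"
  have le_M: "\<phi> k' l' \<le> M" if "k' \<le> K" for k' l'
    unfolding M_def using that by (intro Max_ge) auto
  have "k \<le> K" using far pos by (meson nat_le_linear)
  with le_M pos have "0 < M" by (meson not_le order.strict_trans2)
  with le_M far have le_M': "\<phi> k' l' \<le> M" for k' l'
    by (meson nat_le_linear order.trans less_imp_le)
  have "M \<in> (\<lambda>(k, l). \<phi> k l) ` ({..K} \<times> UNIV)"
    unfolding M_def by (intro Max_in) auto
  then obtain k1 l1 where M: "M = \<phi> k1 l1" by auto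
  with base \<open>0 < M\<close> obtain k0 where "k1 = Suc k0" by (metis not0_implies_Suc not_le)
  with M have "M \<le> level_mean \<phi> k0 l1 + c" using sub by simp
  also have "level_mean \<phi> k0 l1 \<le> level_mean (\<lambda>k l. M) k0 l1"
    by (intro level_mean_mono growth linear_growth_bounded[of _ "\<bar>M\<bar>"] le_M') simp
  finally show False using \<open>c < 0\<close> by (simp add: level_mean_constant)
qed

text \<open>The Poisson equation \<open>(I - A_total) h = drift - eta \<one>\<close> turns \<open>level + h\<close>, shifted to be
  nonnegative, into a Lyapunov function with constant drift \<open>eta < 0\<close>.\<close>

lemma lyapunov_function:
  obtains g :: "real^'n" where "0 \<le> g"
    and "\<And>k j. level_mean (\<lambda>k l. real k + g $ l) k j = real (Suc k) + g $ j + eta"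
proof -
  have "v \<bullet> (drift - eta *\<^sub>R ones) = 0"
    by (simp add: eta_def inner_diff_right v_norm)
  with irred stoch v_stat v_norm obtain h where h: "h - A_total *v h = drift - eta *\<^sub>R ones"
    unfolding A_total_def by (rule irreducible_stochastic_poisson)
  define g where "g = h + (\<Sum>l\<in>UNIV. \<bar>h $ l\<bar>) *\<^sub>R ones"
  have abs_le: "\<bar>h $ l\<bar> \<le> (\<Sum>l\<in>UNIV. \<bar>h $ l\<bar>)" for l
    by (rule member_le_sum) auto
  have "0 \<le> h $ l + (\<Sum>l\<in>UNIV. \<bar>h $ l\<bar>)" for l
    using abs_le[of l] by linarith
  then have "0 \<le> g" by (simp add: g_def less_eq_vec_def)
  have A_g: "A_total *v g = g - drift + eta *\<^sub>R ones"
    using h by (simp add: g_def matrix_vector_right_distrib matrix_vector_mult_scaleR A_total_ones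
        algebra_simps)
  have "level_mean (\<lambda>k l. real k + g $ l) k j = real (Suc k) + g $ j + eta" for k j
    using level_mean_lincomb[where a=1 and b=1, OF linear_growth_level linear_growth_const]
    by (simp add: level_mean_level level_mean_const A_g)
  with \<open>0 \<le> g\<close> show thesis by (rule that)
qed

text \<open>Positive recurrence (\<open>eta < 0\<close>) enters here: \<open>d k l - \<epsilon> (k + g l)\<close> has strictly negative
  drift, so the maximum principle applies to it.\<close>

lemma bounded_subharmonic_le_lyapunov:
  assumes bounded: "\<And>k l. \<bar>d k l\<bar> \<le> C"
    and base: "\<And>l. d 0 l \<le> 0"
    and sub: "\<And>k j. d (Suc k) j \<le> level_mean d k j"
    and "0 \<le> g"
    and lyap: "\<And>k j. level_mean (\<lambda>k l. real k + g $ l) k j = real (Suc k) + g $ j + eta"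
    and "0 < \<epsilon>"
  shows "d k l \<le> \<epsilon> * (real k + g $ l)"
proof -
  define V where "V = (\<lambda>k l. real k + g $ l)"
  have V_nonneg: "0 \<le> V k l" for k l
    using \<open>0 \<le> g\<close> by (simp add: V_def less_eq_vec_def)
  have growth_d: "linear_growth d" using bounded by (rule linear_growth_bounded)
  have growth_V: "linear_growth V"
    unfolding V_def by (rule linear_growth_level_plus_const)
  define \<phi> where "\<phi> = (\<lambda>k l. d k l - \<epsilon> * V k l)"
  have "\<phi> k l \<le> 0"
  proof (rule level_max_principle)
    show "linear_growth \<phi>"
      using linear_growth_lincomb[where a=1 and b="-\<epsilon>", OF growth_d growth_V]
      by (simp add: \<phi>_def)
    show "\<epsilon> * eta < 0"
      using \<open>0 < \<epsilon>\<close> eta_less_0 by (simp add: mult_pos_neg)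
    show "\<phi> 0 l \<le> 0" for l
      using base[of l] V_nonneg[of 0 l] \<open>0 < \<epsilon>\<close>
      by (simp add: \<phi>_def order_trans[OF _ mult_nonneg_nonneg])
    show "\<phi> k l \<le> 0" if "nat \<lceil>C / \<epsilon>\<rceil> \<le> k" for k l
    proof -
      have "C / \<epsilon> \<le> real k"
        using real_nat_ceiling_ge[of "C / \<epsilon>"] that by linarith
      then have "C \<le> \<epsilon> * real k"
        using \<open>0 < \<epsilon>\<close> by (simp add: pos_divide_le_eq mult.commute)
      also have "\<dots> \<le> \<epsilon> * V k l"
        using \<open>0 \<le> g\<close> \<open>0 < \<epsilon>\<close> by (simp add: V_def less_eq_vec_def)
      finally show ?thesis using bounded[of k l] by (simp add: \<phi>_def)
    qed
    show "\<phi> (Suc k) j \<le> level_mean \<phi> k j + \<epsilon> * eta" for k j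
    proof -
      have "level_mean \<phi> k j = level_mean d k j - \<epsilon> * level_mean V k j"
        using level_mean_lincomb[where a=1 and b="-\<epsilon>", OF growth_d growth_V]
        by (simp add: \<phi>_def)
      moreover have "level_mean V k j = V (Suc k) j + eta"
        by (simp add: V_def lyap)
      ultimately show ?thesis using sub[of k j] by (simp add: \<phi>_def algebra_simps)
    qed
  qed
  then show ?thesis by (simp add: \<phi>_def V_def)
qed

lemma bounded_subharmonic_nonpos:
  assumes "\<And>k l. \<bar>d k l\<bar> \<le> C"
    and "\<And>l. d 0 l \<le> 0"
    and "\<And>k j. d (Suc k) j \<le> level_mean d k j"
  shows "d k l \<le> 0"
proof -
  obtain g where "0 \<le> g"
    and lyap: "\<And>k j. level_mean (\<lambda>k l. real k + g $ l) k j = real (Suc k) + g $ j + eta"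
    using lyapunov_function by blast
  have V_nonneg: "0 \<le> real k + g $ l"
    using \<open>0 \<le> g\<close> by (simp add: less_eq_vec_def)
  show ?thesis
  proof (rule field_le_epsilon)
    fix e :: real
    assume "0 < e"
    then have "d k l \<le> e / (real k + g $ l + 1) * (real k + g $ l)"
      using V_nonneg by (intro bounded_subharmonic_le_lyapunov[OF assms \<open>0 \<le> g\<close> lyap]) simp
    also have "\<dots> \<le> e"
      using \<open>0 < e\<close> V_nonneg by (simp add: field_simps)
    finally show "d k l \<le> 0 + e" by simp
  qed
qed

section \<open>Power series in substochastic matrices\<close>

lemma summable_power_series:
  assumes "\<And>k. substochastic (P k)"
  shows "summable (\<lambda>k. A (int k - 1) ** P k)"
proof (rule summable_matI)
  fix i j
  have "norm ((A (int k - 1) ** P k) $ i $ j) \<le> jump_prob k i" for k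
    using matrix_mult_substochastic_nth[OF A_nonneg assms] by (simp add: jump_prob_def)
  then show "summable (\<lambda>k. (A (int k - 1) ** P k) $ i $ j)"
    by (rule summable_comparison_test'[rotated]) (rule summable_jump_prob)
qed

lemma solution_power_recursion:
  assumes "substochastic Z" and sol: "Z = (\<Sum>k. A (int k - 1) ** mpow Z k)"
  shows "(mpow Z (Suc k) *v ones) $ j = level_mean (\<lambda>k l. (mpow Z k *v ones) $ l) k j"
proof -
  have "(mpow Z (Suc k) *v ones) $ j = ((\<Sum>t. A (int t - 1) ** mpow Z t) *v (mpow Z k *v ones)) $ j"
    using sol by (metis matrix_vector_mul_assoc mpow.simps(2))
  also have "\<dots> = (\<Sum>t. ((A (int t - 1) ** mpow Z t) *v (mpow Z k *v ones)) $ j)"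
    by (intro suminf_matrix_vector_mult_nth summable_power_series substochastic_mpow assms)
  also have "\<dots> = (\<Sum>t. (A (int t - 1) *v (mpow Z (t + k) *v ones)) $ j)"
    by (simp add: mpow_add matrix_vector_mul_assoc matrix_mul_assoc)
  finally show ?thesis by (simp add: level_mean_def matrix_vector_mult_nth)
qed

theorem substochastic_solution_stochastic:
  assumes "substochastic Z" and "Z = (\<Sum>k. A (int k - 1) ** mpow Z k)"
  shows "Z *v ones = ones"
proof -
  define q where "q = (\<lambda>k l. (mpow Z k *v ones) $ l)"
  have q_bounds: "0 \<le> q k l \<and> q k l \<le> 1" for k l
    using substochastic_mpow[OF assms(1), of k] matrix_vector_mult_nonneg[OF _ ones_nonneg]
    by (auto simp: q_def substochastic_def less_eq_vec_def)
  have growth_q: "linear_growth q"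
    using q_bounds by (intro linear_growth_bounded[of _ 1]) simp
  have growth_1: "linear_growth (\<lambda>k l. 1)"
    by (rule linear_growth_bounded[of _ 1]) simp
  have defect_nonpos: "1 - q k l \<le> 0" for k l
  proof (rule bounded_subharmonic_nonpos[where C=1])
    show "\<bar>1 - q k l\<bar> \<le> 1" for k l using q_bounds[of k l] by simp
    show "1 - q 0 l \<le> 0" for l by (simp add: q_def)
    show "1 - q (Suc k) j \<le> level_mean (\<lambda>k l. 1 - q k l) k j" for k j
      using level_mean_lincomb[where a=1 and b="-1", OF growth_1 growth_q]
        solution_power_recursion[OF assms, of k j]
      by (simp add: q_def level_mean_constant)
  qed
  have "q 1 l = 1" for l using defect_nonpos[of 1 l] q_bounds[of 1 l] by linarith
  then show ?thesis by (simp add: q_def vec_eq_iff)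
qed

text \<open>\<open>series_tail n Z\<close> is the tail of \<open>\<Sum>\<^sub>i A\<^sub>i Z\<^sup>i\<^sup>+\<^sup>1\<close> from \<open>i = n - 1\<close> on.\<close>

definition series_tail :: "nat \<Rightarrow> real^'n^'n \<Rightarrow> real^'n^'n" where
  "series_tail n Z = (\<Sum>m. A (int (m + n) - 1) ** mpow Z (m + n))"

lemma summable_series_tail:
  assumes "substochastic Z"
  shows "summable (\<lambda>m. A (int (m + n) - 1) ** mpow Z (m + n))"
  by (rule summable_ignore_initial_segment[OF summable_power_series[OF substochastic_mpow[OF assms]]])

lemma series_tail_Suc:
  assumes "substochastic Z"
  shows "series_tail n Z = A (int n - 1) ** mpow Z n + series_tail (Suc n) Z"
  using suminf_split_head[OF summable_series_tail[OF assms, of n]] by (simp add: series_tail_def)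

lemma power_series_split:
  assumes "substochastic Z"
  shows "(\<Sum>k. A (int k - 1) ** mpow Z k) = A (-1) + A 0 ** Z + series_tail 2 Z"
  using series_tail_Suc[OF assms, of 0] series_tail_Suc[OF assms, of 1]
  by (simp add: series_tail_def numeral_2_eq_2)

lemma series_tail_mono:
  assumes "0 \<le> Y" and "Y \<le> Z" and "substochastic Z"
  shows "series_tail n Y \<le> series_tail n Z"
  unfolding series_tail_def
  by (intro suminf_mat_mono summable_series_tail substochastic_le[OF assms] assms(3)
      matrix_mult_left_mono A_nonneg mpow_mono assms(1,2))

lemma tendsto_series_tail:
  assumes sub: "\<And>k. substochastic (X k)" and lim: "X \<longlonglongrightarrow> L"
  shows "(\<lambda>k. series_tail n (X k)) \<longlonglongrightarrow> series_tail n L"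
proof (rule vec_tendstoI)+
  fix i j
  let ?a = "\<lambda>m k. (A (int (m + n) - 1) ** mpow (X k) (m + n)) $ i $ j"
  let ?b = "\<lambda>m. (A (int (m + n) - 1) ** mpow L (m + n)) $ i $ j"
  have "(\<lambda>k. \<Sum>m. ?a m k) \<longlonglongrightarrow> (\<Sum>m. ?b m)"
  proof (rule tannerys_theorem[THEN conjunct2, THEN conjunct2])
    show "(\<lambda>k. ?a m k) \<longlonglongrightarrow> ?b m" for m
      by (intro tendsto_intros lim)
    have "norm (?a m k) \<le> jump_prob (m + n) i" for m k
      using matrix_mult_substochastic_nth[OF A_nonneg[of "m + n"] substochastic_mpow[OF sub[of k]],
          of "m + n" i j]
      by (simp add: jump_prob_def)
    then show "\<forall>\<^sub>F (m, k) in sequentially \<times>\<^sub>F sequentially. norm (?a m k) \<le> jump_prob (m + n) i"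
      by (simp add: always_eventually)
    show "summable (\<lambda>m. jump_prob (m + n) i)"
      by (rule summable_ignore_initial_segment[OF summable_jump_prob])
  qed simp
  moreover have "series_tail n (X k) $ i $ j = (\<Sum>m. ?a m k)" for k
    unfolding series_tail_def by (rule suminf_mat_nth[OF summable_series_tail[OF sub]])
  moreover have "series_tail n L $ i $ j = (\<Sum>m. ?b m)"
    unfolding series_tail_def
    by (rule suminf_mat_nth[OF summable_series_tail[OF substochastic_limit[OF sub lim]]])
  ultimately show "(\<lambda>k. series_tail n (X k) $ i $ j) \<longlonglongrightarrow> series_tail n L $ i $ j"
    by simp
qed

end

section \<open>The relaxed iteration\<close>

locale relaxed_iteration = mg1_type A v
  for A :: "int \<Rightarrow> real^'n^'n" and v +
  fixes \<omega> :: "nat \<Rightarrow> real" and X Y :: "nat \<Rightarrow> real^'n^'n"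
  assumes X0: "X 0 = 0"
    and Y_def: "\<And>k. (mat 1 - A 0) ** Y k
                 = A (-1) + (\<Sum>m. A (int m + 1) ** mpow (X k) (m + 2))"
    and X_step: "\<And>k. X (Suc k) = Y k + \<omega> (Suc k) *\<^sub>R
                 (matrix_inv (mat 1 - A 0) ** A 1 ** (mpow (Y k) 2 - mpow (X k) 2))"
    and elig: "eligible A X Y \<omega>"
begin

lemma Y_eq: "(mat 1 - A 0) ** Y k = A (-1) + series_tail 2 (X k)"
proof -
  have "int (m + 2) - 1 = int m + 1" for m by simp
  then show ?thesis by (simp only: series_tail_def Y_def)
qed

lemma omega_nonneg: "0 \<le> \<omega> (Suc k)"
proof -
  have "\<forall>k\<ge>1. 0 \<le> \<omega> k" using elig unfolding eligible_def by blast
  then show ?thesis by simp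
qed

lemma X_Suc_row_sums: "X (Suc k) *v ones \<le> ones"
  using elig unfolding eligible_def by blast

lemma eligibility_bound:
  "\<omega> (Suc k) *\<^sub>R (A 1 ** (mpow (Y k) 2 - mpow (X k) 2))
     \<le> A 1 ** (mpow (X (Suc k)) 2 - mpow (X k) 2)
       + (\<Sum>m. A (int m + 2) ** (mpow (Y k) (m + 3) - mpow (X k) (m + 3)))"
  using elig unfolding eligible_def by blast

lemma Y_le_X_Suc_step:
  assumes "0 \<le> X k" and "X k \<le> Y k"
  shows "Y k \<le> X (Suc k)"
proof -
  have "0 \<le> matrix_inv (mat 1 - A 0) ** A 1 ** (mpow (Y k) 2 - mpow (X k) 2)"
    using mpow_mono[OF assms, of 2] A_nonneg[of 2]
    by (intro matrix_mult_nonneg I_minus_A0_inv_nonneg) simp_all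
  then show ?thesis
    using omega_nonneg[of k] by (simp add: X_step scaleR_nonneg_nonneg)
qed

lemma X_Suc_le_Y_Suc_step:
  assumes sX: "substochastic (X k)" and "X k \<le> Y k" and "Y k \<le> X (Suc k)"
    and sX': "substochastic (X (Suc k))"
  shows "X (Suc k) \<le> Y (Suc k)"
proof -
  let ?B = "mat 1 - A 0" and ?T = "series_tail 3"
  define W where "W = \<omega> (Suc k) *\<^sub>R (A 1 ** (mpow (Y k) 2 - mpow (X k) 2))"
  have "0 \<le> Y k" using sX \<open>X k \<le> Y k\<close> by (auto simp: substochastic_def intro: order_trans)
  then have sY: "substochastic (Y k)" using \<open>Y k \<le> X (Suc k)\<close> sX' by (rule substochastic_le)
  have B_X': "?B ** X (Suc k) = A (-1) + series_tail 2 (X k) + W"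
    by (simp add: X_step W_def Y_eq matrix_add_ldistrib matrix_scalar_ac
        scalar_matrix_assoc[symmetric] matrix_mul_assoc matrix_inv_inverse[OF invertible_I_minus_A0])
  have "(\<Sum>m. A (int m + 2) ** (mpow (Y k) (m + 3) - mpow (X k) (m + 3))) = ?T (Y k) - ?T (X k)"
    using suminf_diff[OF summable_series_tail[OF sY, of 3] summable_series_tail[OF sX, of 3]]
    by (simp add: series_tail_def matrix_diff_ldistrib algebra_simps)
  then have W_le: "W \<le> A 1 ** (mpow (X (Suc k)) 2 - mpow (X k) 2) + (?T (Y k) - ?T (X k))"
    using eligibility_bound[of k] by (simp add: W_def)
  have "?B ** (Y (Suc k) - X (Suc k))
      = (?T (X (Suc k)) - ?T (Y k))
        + (A 1 ** (mpow (X (Suc k)) 2 - mpow (X k) 2) + (?T (Y k) - ?T (X k)) - W)"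
    using series_tail_Suc[OF sX', of 2] series_tail_Suc[OF sX, of 2]
    by (simp add: matrix_diff_ldistrib Y_eq B_X' algebra_simps)
  also have "0 \<le> \<dots>"
    using series_tail_mono[OF \<open>0 \<le> Y k\<close> \<open>Y k \<le> X (Suc k)\<close> sX', of 3] W_le
    by (intro add_nonneg_nonneg) simp_all
  finally have "0 \<le> Y (Suc k) - X (Suc k)"
    by (rule I_minus_A0_cancel_nonneg)
  then show ?thesis by simp
qed

lemma iteration_invariant: "X k \<le> Y k \<and> substochastic (X k)"
proof (induction k)
  case 0
  have B_Y0: "(mat 1 - A 0) ** Y 0 = A (-1)"
    using Y_eq[of 0] by (simp add: X0 series_tail_def mpow_zero)
  have "0 \<le> Y 0"
    by (rule I_minus_A0_cancel_nonneg) (use B_Y0 A_nonneg[of 0] in simp)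
  then show ?case by (simp add: X0 substochastic_def less_eq_vec_def)
next
  case (Suc k)
  then have "0 \<le> X k" and "X k \<le> Y k" by (simp_all add: substochastic_def)
  then have "Y k \<le> X (Suc k)" by (rule Y_le_X_Suc_step)
  moreover have "0 \<le> X (Suc k)"
    using \<open>0 \<le> X k\<close> \<open>X k \<le> Y k\<close> \<open>Y k \<le> X (Suc k)\<close> by (blast intro: order_trans)
  then have "substochastic (X (Suc k))"
    using X_Suc_row_sums by (simp add: substochastic_def)
  ultimately show ?case
    using Suc \<open>X k \<le> Y k\<close> by (blast intro: X_Suc_le_Y_Suc_step)
qed

lemma substochastic_X: "substochastic (X k)"
  using iteration_invariant by blast

lemma X_le_Y: "X k \<le> Y k"
  using iteration_invariant by blast

lemma Y_le_X_Suc: "Y k \<le> X (Suc k)"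
  using substochastic_X X_le_Y by (intro Y_le_X_Suc_step) (simp_all add: substochastic_def)

lemma X_mono: "X k \<le> X (Suc k)"
  using X_le_Y Y_le_X_Suc by (rule order_trans)

lemma X_convergent: obtains L where "X \<longlonglongrightarrow> L"
proof -
  have "convergent (\<lambda>k. X k $ i $ j)" for i j
  proof (rule Bseq_mono_convergent)
    show "Bseq (\<lambda>k. X k $ i $ j)"
      using substochastic_entry[OF substochastic_X] by (intro BseqI'[of _ 1]) auto
    show "\<forall>m n. m \<le> n \<longrightarrow> X m $ i $ j \<le> X n $ i $ j"
    proof (intro allI impI)
      fix m n :: nat
      assume "m \<le> n"
      with X_mono show "X m $ i $ j \<le> X n $ i $ j"
        by (rule_tac lift_Suc_mono_le[of "\<lambda>k. X k $ i $ j"]) (auto simp: less_eq_mat_iff)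
    qed
  qed
  then have "X \<longlonglongrightarrow> (\<chi> i j. lim (\<lambda>k. X k $ i $ j))"
    by (intro vec_tendstoI) (simp add: convergent_LIMSEQ_iff)
  then show thesis by (rule that)
qed

lemma limit_substochastic_solution:
  assumes lim: "X \<longlonglongrightarrow> L"
  shows "substochastic L" and "L = (\<Sum>k. A (int k - 1) ** mpow L k)"
proof -
  show sL: "substochastic L"
    using substochastic_X lim by (rule substochastic_limit)
  have "Y \<longlonglongrightarrow> L"
  proof (rule vec_tendstoI)+
    fix i j
    have X_ij: "(\<lambda>k. X k $ i $ j) \<longlonglongrightarrow> L $ i $ j"
      using lim by (intro tendsto_vec_nth)
    moreover have "(\<lambda>k. X (Suc k) $ i $ j) \<longlonglongrightarrow> L $ i $ j"
      using LIMSEQ_Suc[OF X_ij] by simp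
    ultimately show "(\<lambda>k. Y k $ i $ j) \<longlonglongrightarrow> L $ i $ j"
      by (rule tendsto_sandwich[rotated 2])
        (use X_le_Y Y_le_X_Suc in \<open>auto simp: less_eq_mat_iff\<close>)
  qed
  then have "(\<lambda>k. (mat 1 - A 0) ** Y k) \<longlonglongrightarrow> (mat 1 - A 0) ** L"
    by (intro tendsto_intros)
  moreover have "(\<lambda>k. (mat 1 - A 0) ** Y k) \<longlonglongrightarrow> A (-1) + series_tail 2 L"
    unfolding Y_eq by (intro tendsto_intros tendsto_series_tail substochastic_X lim)
  ultimately have "(mat 1 - A 0) ** L = A (-1) + series_tail 2 L"
    by (rule LIMSEQ_unique)
  then show "L = (\<Sum>k. A (int k - 1) ** mpow L k)"
    by (simp add: power_series_split[OF sL] matrix_diff_rdistrib algebra_simps)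
qed

end

theorem proposition3:
  fixes A :: "int \<Rightarrow> real^'n^'n"
    and v :: "real^'n"
    and G :: "real^'n^'n"
    and \<omega> :: "nat \<Rightarrow> real"
    and X Y :: "nat \<Rightarrow> real^'n^'n"
  assumes nonneg: "\<And>i. i \<ge> -1 \<Longrightarrow> 0 \<le> A i"
    and summable_A: "summable (\<lambda>k. A (int k - 1))"
    and irred: "irreducible_mat (\<Sum>k. A (int k - 1))"
    and stoch: "row_stochastic (\<Sum>k. A (int k - 1))"
    and summable_iA: "summable (\<lambda>k. of_int (int k - 1) *\<^sub>R A (int k - 1))"
    and v_pos: "\<And>i. v $ i > 0"
    and v_stat: "v v* (\<Sum>k. A (int k - 1)) = v"
    and v_norm: "v \<bullet> ones = 1"
    and eta_neg: "v \<bullet> ((\<Sum>k. of_int (int k - 1) *\<^sub>R A (int k - 1)) *v ones) < 0"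
    and G_nonneg: "0 \<le> G"
    and G_summable: "summable (\<lambda>k. A (int k - 1) ** mpow G k)"
    and G_sol: "G = (\<Sum>k. A (int k - 1) ** mpow G k)"
    and G_min: "\<And>Z. 0 \<le> Z \<Longrightarrow> summable (\<lambda>k. A (int k - 1) ** mpow Z k)
                 \<Longrightarrow> Z = (\<Sum>k. A (int k - 1) ** mpow Z k) \<Longrightarrow> G \<le> Z"
    and X0: "X 0 = 0"
    and Y_def: "\<And>k. (mat 1 - A 0) ** Y k
                 = A (-1) + (\<Sum>m. A (int m + 1) ** mpow (X k) (m + 2))"
    and X_step: "\<And>k. X (Suc k) = Y k + \<omega> (Suc k) *\<^sub>R
                 (matrix_inv (mat 1 - A 0) ** A 1 ** (mpow (Y k) 2 - mpow (X k) 2))"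
    and elig: "eligible A X Y \<omega>"
  shows "(\<forall>k. X k \<le> X (Suc k)) \<and> X \<longlonglongrightarrow> G"
proof -
  interpret relaxed_iteration A v \<omega> X Y
    by (unfold_locales; fact assms)
  obtain L where lim: "X \<longlonglongrightarrow> L"
    by (rule X_convergent)
  have sL: "substochastic L" and L_sol: "L = (\<Sum>k. A (int k - 1) ** mpow L k)"
    using lim by (rule limit_substochastic_solution)+
  have "G \<le> L"
    using sL L_sol summable_power_series[OF substochastic_mpow[OF sL]]
    by (intro G_min) (simp_all add: substochastic_def)
  have sG: "substochastic G"
    using G_nonneg \<open>G \<le> L\<close> sL by (rule substochastic_le)
  have "G *v ones = L *v ones"
    using substochastic_solution_stochastic[OF sG G_sol]
      substochastic_solution_stochastic[OF sL L_sol] by simp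
  with \<open>G \<le> L\<close> have "G = L"
    by (rule eq_if_le_and_row_sums_eq)
  with X_mono lim show ?thesis by simp
qed

end
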